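(* Let $\mathcal L$ be an MV-algebra and let $P\subsetneq Q$ be prime implication filters. For all $\mathcal F,\mathcal G\in\mathrm{PSpec}(P)$, $$q_Q(\mathcal F^+)=\lnot\, q_Q(\mathcal F)\quad\text{and}\quad q_Q(\mathcal F\sqsubseteq\!\!\to\mathcal G)=q_Q(\mathcal F)\to q_Q(\mathcal G),$$ where $\lnot$ and $\to$ on the right are the operations of $\mathcal L/Q$. Thus $\mathcal F\mapsto q_Q(\mathcal F)$ induces an MV-morphism $\hat\eta_{PQ}\colon\hat{\mathcal L}_P\to\mathcal L/Q$.
   Context: $\mathcal L=(L,\oplus,\lnot,0)$ is an MV-algebra. We write $1=\lnot0$, $x\otimes y=\lnot(\lnot x\oplus\lnot y)$, and $x\to y=\lnot x\oplus y$. An implication filter is a set $P\ni1$ closed under modus ponens. $\mathcal L/P$ is the quotient by $x\sim_P y\iff x\to y,\ y\to x\in P$, with cosets $[x]_P$. $P$ is prime if $\mathcal L/P$ is linearly ordered. A lattice filter is a nonempty upward-closed subset closed under $\wedge$; it is prime if it is proper and $a\vee b\in\mathcal F$ implies $a\in\mathcal F$ or $b\in\mathcal F$. For upward-closed $\mathcal F$ and $a\in L$, let $\mathcal F_a=\{z:z\to a\notin\mathcal F\}$, $\mathcal F^+=\mathcal F_0$, and $\mathcal K(\mathcal F)=\{z:\forall a\notin\mathcal F,\ z\to a\notin\mathcal F\}$. $\mathrm{PSpec}(P)$ is the set of prime lattice filters with kernel $P$. For $\mathcal F\subseteq\mathcal G$ we put $\mathcal F\sqsubseteq\!\!\to\mathcal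 G=\bigcap_{a\notin\mathcal G}\mathcal F_a$, and in general $\mathcal F\sqsubseteq\!\!\to\mathcal G:=(\mathcal F\cap\mathcal G)\sqsubseteq\!\!\to\mathcal G$. For a prime lattice filter $\mathcal F$ and a prime implication filter $Q$ properly containing $\mathcal K(\mathcal F)$, $q_Q(\mathcal F)$ denotes the unique $Q$-coset $C$ with $C\cap\mathcal F\ne\emptyset\ne C\setminus\mathcal F$. $\hat{\mathcal L}_P$ is $\mathrm{PSpec}(P)$ modulo the relation $\mathcal F\equiv\mathcal G\iff\mathcal F\sqsubseteq\!\!\to\mathcal G=\mathcal G\sqsubseteq\!\!\to\mathcal F=P$, with operations ${}^+$ and $\sqsubseteq\!\!\to$. *)

theory Defs
  imports Main
begin

record 'a mv =
  mv_car  :: "'a set"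
  mv_plus :: "'a \<Rightarrow> 'a \<Rightarrow> 'a"
  mv_neg  :: "'a \<Rightarrow> 'a"
  mv_zero :: "'a"

definition mv_one :: "'a mv \<Rightarrow> 'a" where
  "mv_one A = mv_neg A (mv_zero A)"

definition mv_imp :: "'a mv \<Rightarrow> 'a \<Rightarrow> 'a \<Rightarrow> 'a" where
  "mv_imp A x y = mv_plus A (mv_neg A x) y"

definition mv_times :: "'a mv \<Rightarrow> 'a \<Rightarrow> 'a \<Rightarrow> 'a" where
  "mv_times A x y = mv_neg A (mv_plus A (mv_neg A x) (mv_neg A y))"

definition mv_algebra :: "'a mv \<Rightarrow> bool" where
  "mv_algebra A \<longleftrightarrow>
     mv_zero A \<in> mv_car A \<and>
     (\<forall>x\<in>mv_car A. mv_neg A x \<in> mv_car A) \<and>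
     (\<forall>x\<in>mv_car A. \<forall>y\<in>mv_car A. mv_plus A x y \<in> mv_car A) \<and>
     (\<forall>x\<in>mv_car A. \<forall>y\<in>mv_car A. \<forall>z\<in>mv_car A.
        mv_plus A x (mv_plus A y z) = mv_plus A (mv_plus A x y) z) \<and>
     (\<forall>x\<in>mv_car A. \<forall>y\<in>mv_car A. mv_plus A x y = mv_plus A y x) \<and>
     (\<forall>x\<in>mv_car A. mv_plus A x (mv_zero A) = x) \<and>
     (\<forall>x\<in>mv_car A. mv_neg A (mv_neg A x) = x) \<and>
     (\<forall>x\<in>mv_car A. mv_plus A x (mv_neg A (mv_zero A)) = mv_neg A (mv_zero A)) \<and>
     (\<forall>x\<in>mv_car A. \<forall>y\<in>mv_car A.
        mv_plus A (mv_neg A (mv_plus A (mv_neg A x) y)) y =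
        mv_plus A (mv_neg A (mv_plus A (mv_neg A y) x)) x)"

definition mv_le :: "'a mv \<Rightarrow> 'a \<Rightarrow> 'a \<Rightarrow> bool" where
  "mv_le A x y \<longleftrightarrow> mv_imp A x y = mv_one A"

definition mv_sup :: "'a mv \<Rightarrow> 'a \<Rightarrow> 'a \<Rightarrow> 'a" where
  "mv_sup A x y = mv_plus A (mv_neg A (mv_plus A (mv_neg A x) y)) y"

definition mv_inf :: "'a mv \<Rightarrow> 'a \<Rightarrow> 'a \<Rightarrow> 'a" where
  "mv_inf A x y = mv_neg A (mv_sup A (mv_neg A x) (mv_neg A y))"

definition impl_filter :: "'a mv \<Rightarrow> 'a set \<Rightarrow> bool" where
  "impl_filter A P \<longleftrightarrow> P \<subseteq> mv_car A \<and> mv_one A \<in> P \<and>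
     (\<forall>x\<in>mv_car A. \<forall>y\<in>mv_car A. x \<in> P \<and> mv_imp A x y \<in> P \<longrightarrow> y \<in> P)"

definition mv_coset :: "'a mv \<Rightarrow> 'a set \<Rightarrow> 'a \<Rightarrow> 'a set" where
  "mv_coset A P x = {y\<in>mv_car A. mv_imp A x y \<in> P \<and> mv_imp A y x \<in> P}"

definition mv_quot :: "'a mv \<Rightarrow> 'a set \<Rightarrow> 'a set set" where
  "mv_quot A P = mv_coset A P ` mv_car A"

text \<open>Quotient operations: negation and implication of cosets, computed on
  representatives (they are well defined since \<sim>_P is a congruence).\<close>
definition quot_neg :: "'a mv \<Rightarrow> 'a set \<Rightarrow> 'a set \<Rightarrow> 'a set" where
  "quot_neg A P C = (\<Union>x\<in>C. mv_coset A P (mv_neg A x))"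

definition quot_imp :: "'a mv \<Rightarrow> 'a set \<Rightarrow> 'a set \<Rightarrow> 'a set \<Rightarrow> 'a set" where
  "quot_imp A P C D = (\<Union>x\<in>C. \<Union>y\<in>D. mv_coset A P (mv_imp A x y))"

text \<open>P is prime iff L/P is linearly ordered (order of the quotient MV-algebra:
  C \<le> D iff C \<rightarrow> D = [1]).\<close>
definition prime_impl_filter :: "'a mv \<Rightarrow> 'a set \<Rightarrow> bool" where
  "prime_impl_filter A P \<longleftrightarrow> impl_filter A P \<and>
     (\<forall>C\<in>mv_quot A P. \<forall>D\<in>mv_quot A P.
        quot_imp A P C D = mv_coset A P (mv_one A) \<or>
        quot_imp A P D C = mv_coset A P (mv_one A))"

definition up_closed :: "'a mv \<Rightarrow> 'a set \<Rightarrow> bool" where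
  "up_closed A F \<longleftrightarrow> F \<subseteq> mv_car A \<and>
     (\<forall>x\<in>F. \<forall>y\<in>mv_car A. mv_le A x y \<longrightarrow> y \<in> F)"

definition lattice_filter :: "'a mv \<Rightarrow> 'a set \<Rightarrow> bool" where
  "lattice_filter A F \<longleftrightarrow> F \<noteq> {} \<and> up_closed A F \<and>
     (\<forall>x\<in>F. \<forall>y\<in>F. mv_inf A x y \<in> F)"

definition prime_lattice_filter :: "'a mv \<Rightarrow> 'a set \<Rightarrow> bool" where
  "prime_lattice_filter A F \<longleftrightarrow> lattice_filter A F \<and> F \<noteq> mv_car A \<and>
     (\<forall>a\<in>mv_car A. \<forall>b\<in>mv_car A. mv_sup A a b \<in> F \<longrightarrow> a \<in> F \<or> b \<in> F)"

definition fsub :: "'a mv \<Rightarrow> 'a set \<Rightarrow> 'a \<Rightarrow> 'a set" where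
  "fsub A F a = {z\<in>mv_car A. mv_imp A z a \<notin> F}"

definition fplus :: "'a mv \<Rightarrow> 'a set \<Rightarrow> 'a set" where
  "fplus A F = fsub A F (mv_zero A)"

definition kernel :: "'a mv \<Rightarrow> 'a set \<Rightarrow> 'a set" where
  "kernel A F = {z\<in>mv_car A. \<forall>a\<in>mv_car A - F. mv_imp A z a \<notin> F}"

definition PSpec :: "'a mv \<Rightarrow> 'a set \<Rightarrow> 'a set set" where
  "PSpec A P = {F. prime_lattice_filter A F \<and> kernel A F = P}"

text \<open>F \<sqsubseteq>\<rightarrow> G = (F \<inter> G) \<sqsubseteq>\<rightarrow> G = \<Inter>_{a \<notin> G} (F \<inter> G)_a
  (the empty intersection being the whole carrier).\<close>
definition fimp :: "'a mv \<Rightarrow> 'a set \<Rightarrow> 'a set \<Rightarrow> 'a set" where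
  "fimp A F G = {z\<in>mv_car A. \<forall>a\<in>mv_car A - G. z \<in> fsub A (F \<inter> G) a}"

definition qQ :: "'a mv \<Rightarrow> 'a set \<Rightarrow> 'a set \<Rightarrow> 'a set" where
  "qQ A Q F = (THE C. C \<in> mv_quot A Q \<and> C \<inter> F \<noteq> {} \<and> C - F \<noteq> {})"

text \<open>The equivalence on PSpec(P) defining \<^emph>\<open>hat L_P\<close>.\<close>
definition pspec_equiv :: "'a mv \<Rightarrow> 'a set \<Rightarrow> 'a set \<Rightarrow> 'a set \<Rightarrow> bool" where
  "pspec_equiv A P F G \<longleftrightarrow> fimp A F G = P \<and> fimp A G F = P"

end

theory Submission
  imports Defs
begin

(* The proof rests on
   one notion: a set X \<subseteq> L is P-saturated if x \<in> X and x \<rightarrow> y \<in> P imply y \<in> X.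
   Every F \<in> PSpec(P) is P-saturated (P is its kernel), and so are F^+ and
   F \<sqsubseteq>\<rightarrow> G.  Since P is prime, everything outside a P-saturated X lies P-below
   everything inside it; consequently at most one Q-coset can meet both X and
   its complement, so q_Q(X) is determined by ANY coset with an element inside
   and an element outside X ("crossing" coset).  For F \<in> PSpec(P) a crossing
   coset exists: an element of Q - P is not in the kernel of F.  Each identity of the theorem is then obtained by
   exhibiting explicit crossing witnesses: negating the witnesses of F for F^+,
   and for F \<sqsubseteq>\<rightarrow> G a case split on whether q_Q(F) \<le> q_Q(G) in L/Q.
   Compatibility with the equivalence defining hat L_P follows from the
   implication identity, because q_Q(P) is the top coset Q. *)

locale mv_alg =
  fixes A :: "'a mv"
  assumes mv: "mv_algebra A"
begin

abbreviation "L \<equiv> mv_car A"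
abbreviation "oplus \<equiv> mv_plus A"
abbreviation "neg \<equiv> mv_neg A"
abbreviation "zero \<equiv> mv_zero A"
abbreviation "one \<equiv> mv_one A"
abbreviation "imp \<equiv> mv_imp A"
abbreviation "le \<equiv> mv_le A"
abbreviation "join \<equiv> mv_sup A"

section \<open>Arithmetic of MV-algebras\<close>

lemma zero_closed [simp]: "zero \<in> L"
  using mv unfolding mv_algebra_def by blast

lemma neg_closed [simp]: "x \<in> L \<Longrightarrow> neg x \<in> L"
  using mv unfolding mv_algebra_def by blast

lemma plus_closed [simp]: "x \<in> L \<Longrightarrow> y \<in> L \<Longrightarrow> oplus x y \<in> L"
  using mv unfolding mv_algebra_def by blast

lemma one_closed [simp]: "one \<in> L"
  unfolding mv_one_def by simp

lemma imp_closed [simp]: "x \<in> L \<Longrightarrow> y \<in> L \<Longrightarrow> imp x y \<in> L"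
  unfolding mv_imp_def by simp

lemma join_closed [simp]: "x \<in> L \<Longrightarrow> y \<in> L \<Longrightarrow> join x y \<in> L"
  unfolding mv_sup_def by simp

lemma plus_assoc: "x \<in> L \<Longrightarrow> y \<in> L \<Longrightarrow> z \<in> L \<Longrightarrow> oplus (oplus x y) z = oplus x (oplus y z)"
  using mv unfolding mv_algebra_def by metis

lemma plus_comm: "x \<in> L \<Longrightarrow> y \<in> L \<Longrightarrow> oplus x y = oplus y x"
  using mv unfolding mv_algebra_def by metis

lemma plus_left_comm: "x \<in> L \<Longrightarrow> y \<in> L \<Longrightarrow> z \<in> L \<Longrightarrow> oplus x (oplus y z) = oplus y (oplus x z)"
  by (metis plus_assoc plus_comm)

lemmas plus_ac = plus_assoc plus_comm plus_left_comm

lemma plus_zero [simp]: "x \<in> L \<Longrightarrow> oplus x zero = x"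
  using mv unfolding mv_algebra_def by metis

lemma zero_plus [simp]: "x \<in> L \<Longrightarrow> oplus zero x = x"
  by (metis plus_zero plus_comm zero_closed)

lemma neg_neg [simp]: "x \<in> L \<Longrightarrow> neg (neg x) = x"
  using mv unfolding mv_algebra_def by metis

lemma plus_one [simp]: "x \<in> L \<Longrightarrow> oplus x one = one"
  using mv unfolding mv_algebra_def mv_one_def by metis

lemma one_plus [simp]: "x \<in> L \<Longrightarrow> oplus one x = one"
  by (metis plus_one plus_comm one_closed)

lemma neg_one [simp]: "neg one = zero"
  unfolding mv_one_def by simp

text \<open>The characteristic axiom of MV-algebras: \<open>x \<or> y\<close> is symmetric.\<close>
lemma join_axiom: "x \<in> L \<Longrightarrow> y \<in> L \<Longrightarrow> oplus (neg (oplus (neg x) y)) y = oplus (neg (oplus (neg y) x)) x"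
  using mv unfolding mv_algebra_def by metis

lemma neg_plus_self [simp]: "x \<in> L \<Longrightarrow> oplus (neg x) x = one"
  using join_axiom[of x one] by simp

lemma plus_neg_self [simp]: "x \<in> L \<Longrightarrow> oplus x (neg x) = one"
  by (metis plus_comm neg_closed neg_plus_self)

lemma imp_one [simp]: "x \<in> L \<Longrightarrow> imp x one = one"
  unfolding mv_imp_def by simp

lemma one_imp [simp]: "x \<in> L \<Longrightarrow> imp one x = x"
  unfolding mv_imp_def by simp

lemma neg_plus_self_absorb [simp]: "x \<in> L \<Longrightarrow> w \<in> L \<Longrightarrow> oplus (neg x) (oplus x w) = one"
  by (metis plus_assoc neg_closed neg_plus_self one_plus)

lemma imp_self [simp]: "x \<in> L \<Longrightarrow> imp x x = one"
  unfolding mv_imp_def by simp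

lemma imp_contrapos: "x \<in> L \<Longrightarrow> y \<in> L \<Longrightarrow> imp (neg y) (neg x) = imp x y"
  unfolding mv_imp_def by (simp add: plus_comm)

lemma imp_imp_eq_join: "imp (imp x y) y = join x y"
  unfolding mv_sup_def mv_imp_def ..

section \<open>The natural order\<close>

lemma le_iff_plus: "le x y \<longleftrightarrow> oplus (neg x) y = one"
  unfolding mv_le_def mv_imp_def ..

lemma le_plus: "x \<in> L \<Longrightarrow> w \<in> L \<Longrightarrow> le x (oplus x w)"
  unfolding le_iff_plus by simp

text \<open>In an MV-algebra \<open>x \<le> y\<close> iff \<open>y = x \<oplus> z\<close> for some \<open>z\<close>; we need the
  forward direction to transport the order along \<open>\<oplus>\<close>.\<close>
lemma le_plus_ex:
  assumes "x \<in> L" "y \<in> L" "le x y"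
  shows "\<exists>z\<in>L. y = oplus x z"
proof -
  have "oplus (neg (oplus (neg x) y)) y = y" using assms by (simp add: le_iff_plus)
  hence "y = oplus (neg (oplus (neg y) x)) x" using join_axiom assms by metis
  thus ?thesis using assms by (metis plus_comm neg_closed plus_closed)
qed

lemma plus_mono:
  assumes "x \<in> L" "y \<in> L" "w \<in> L" "le x y"
  shows "le (oplus w x) (oplus w y)"
proof -
  obtain u where u: "u \<in> L" "y = oplus x u" using le_plus_ex assms by blast
  have "oplus w y = oplus (oplus w x) u" using u assms by (simp add: plus_assoc)
  thus ?thesis using le_plus assms u by simp
qed

lemma neg_antimono: "x \<in> L \<Longrightarrow> y \<in> L \<Longrightarrow> le x y \<Longrightarrow> le (neg y) (neg x)"
  unfolding le_iff_plus by (simp add: plus_comm)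

lemma imp_antimono:
  assumes "x \<in> L" "y \<in> L" "w \<in> L" "le x y"
  shows "le (imp y w) (imp x w)"
  using plus_mono[OF neg_closed neg_closed assms(3) neg_antimono[OF assms(1,2,4)]] assms
  unfolding mv_imp_def by (simp add: plus_comm)

lemma join_commute: "x \<in> L \<Longrightarrow> y \<in> L \<Longrightarrow> join x y = join y x"
  unfolding mv_sup_def by (rule join_axiom)

lemma join_upper2: "x \<in> L \<Longrightarrow> y \<in> L \<Longrightarrow> le y (join x y)"
  unfolding mv_sup_def by (metis plus_comm le_plus neg_closed plus_closed)

lemma join_upper1: "x \<in> L \<Longrightarrow> y \<in> L \<Longrightarrow> le x (join x y)"
  by (metis join_commute join_upper2)

text \<open>The suffixing law \<open>a \<rightarrow> b \<le> (b \<rightarrow> c) \<rightarrow> (a \<rightarrow> c)\<close>, which makes the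
  relation "\<open>x \<rightarrow> y\<close> lies in a filter" transitive.\<close>
lemma imp_suffixing:
  assumes "a \<in> L" "b \<in> L" "c \<in> L"
  shows "le (imp a b) (imp (imp b c) (imp a c))"
proof -
  txt \<open>\<open>m = a \<odot> (a \<rightarrow> b)\<close> is below \<open>b\<close> (modus ponens), so antitonicity of \<open>\<rightarrow>\<close>
    gives \<open>b \<rightarrow> c \<le> m \<rightarrow> c\<close>, which is the claim after residuation.\<close>
  define m where "m = neg (oplus (neg a) (neg (imp a b)))"
  have mL: "m \<in> L" using assms by (simp add: m_def)
  have "le m b" using assms unfolding m_def le_iff_plus mv_imp_def
    by (simp add: plus_ac) (metis plus_assoc neg_closed plus_closed plus_neg_self)
  hence "le (imp b c) (imp m c)" using imp_antimono mL assms by blast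
  thus ?thesis using assms unfolding m_def le_iff_plus mv_imp_def by (simp add: plus_ac)
qed

lemma imp_prefixing:
  assumes "u \<in> L" "v \<in> L" "w \<in> L"
  shows "le (imp u v) (imp (imp w u) (imp w v))"
  using imp_suffixing[OF assms(3,1,2)] assms unfolding le_iff_plus mv_imp_def by (simp add: plus_ac)

section \<open>Implication filters and their quotients\<close>

lemma filter_subset: "impl_filter A Q \<Longrightarrow> Q \<subseteq> L"
  unfolding impl_filter_def by (elim conjE)

lemma filter_one: "impl_filter A Q \<Longrightarrow> one \<in> Q"
  unfolding impl_filter_def by (elim conjE)

lemma filter_mp:
  assumes "impl_filter A Q" "x \<in> Q" "imp x y \<in> Q" "y \<in> L"
  shows "y \<in> Q"
  using assms filter_subset[OF assms(1)] unfolding impl_filter_def by blast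

lemma filter_up:
  assumes "impl_filter A Q" "x \<in> Q" "y \<in> L" "le x y"
  shows "y \<in> Q"
  using filter_mp[OF assms(1,2) _ assms(3)] filter_one[OF assms(1)] assms(4)
  unfolding mv_le_def by simp

text \<open>The relation \<open>x \<rightarrow> y \<in> Q\<close> is a preorder on \<open>L\<close>; \<open>\<sim>\<^sub>Q\<close> is its symmetric part.\<close>
lemma filter_trans:
  assumes "impl_filter A Q" "x \<in> L" "y \<in> L" "z \<in> L" "imp x y \<in> Q" "imp y z \<in> Q"
  shows "imp x z \<in> Q"
proof -
  have "imp (imp y z) (imp x z) \<in> Q"
    using filter_up[OF assms(1,5) _ imp_suffixing[OF assms(2-4)]] assms(2-4) by simp
  thus ?thesis using filter_mp[OF assms(1,6)] assms(2,4) by simp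
qed

lemma coset_iff: "y \<in> mv_coset A Q x \<longleftrightarrow> y \<in> L \<and> imp x y \<in> Q \<and> imp y x \<in> Q"
  unfolding mv_coset_def by simp

lemma coset_refl: "impl_filter A Q \<Longrightarrow> x \<in> L \<Longrightarrow> x \<in> mv_coset A Q x"
  using coset_iff filter_one by simp

lemma coset_eq:
  assumes "impl_filter A Q" "x \<in> L" "y \<in> L" "imp x y \<in> Q" "imp y x \<in> Q"
  shows "mv_coset A Q x = mv_coset A Q y"
proof (intro set_eqI iffI)
  fix z assume "z \<in> mv_coset A Q x"
  thus "z \<in> mv_coset A Q y"
    using filter_trans[OF assms(1) assms(3,2) _ assms(5)] filter_trans[OF assms(1) _ assms(2,3) _ assms(4)]
    unfolding coset_iff by blast
next
  fix z assume "z \<in> mv_coset A Q y"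
  thus "z \<in> mv_coset A Q x"
    using filter_trans[OF assms(1) assms(2,3) _ assms(4)] filter_trans[OF assms(1) _ assms(3,2) _ assms(5)]
    unfolding coset_iff by blast
qed

lemma coset_eq_member:
  "impl_filter A Q \<Longrightarrow> x \<in> L \<Longrightarrow> y \<in> mv_coset A Q x \<Longrightarrow> mv_coset A Q y = mv_coset A Q x"
  using coset_eq[of Q y x] coset_iff by auto

lemma coset_one_iff: "impl_filter A Q \<Longrightarrow> z \<in> mv_coset A Q one \<longleftrightarrow> z \<in> Q"
  unfolding coset_iff using filter_one filter_subset by (metis one_imp imp_one subsetD)

lemma coset_eq_one_iff:
  assumes "impl_filter A Q" "x \<in> L"
  shows "mv_coset A Q x = mv_coset A Q one \<longleftrightarrow> x \<in> Q"
  using coset_one_iff[OF assms(1)] coset_refl[OF assms] coset_eq_member[OF assms(1) one_closed]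
  by blast

lemma filter_plus_cong:
  assumes "impl_filter A Q" "u \<in> L" "u' \<in> L" "z \<in> L" "imp u u' \<in> Q"
  shows "imp (oplus u z) (oplus u' z) \<in> Q"
proof -
  have "le (neg u) (join (neg u) z)" using join_upper1[of "neg u" z] assms by simp
  hence "le (oplus u' (neg u)) (oplus u' (join (neg u) z))" using plus_mono[of "neg u" _ u'] assms by simp
  moreover have "oplus u' (neg u) = imp u u'" unfolding mv_imp_def using assms plus_comm by simp
  moreover have "oplus u' (join (neg u) z) = imp (oplus u z) (oplus u' z)"
    unfolding mv_sup_def mv_imp_def using assms plus_left_comm[of u' "neg (oplus u z)" z] plus_comm[of u' z]
    by simp
  ultimately have "le (imp u u') (imp (oplus u z) (oplus u' z))" by simp
  thus ?thesis using filter_up[OF assms(1,5)] assms by simp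
qed

lemma filter_imp_cong:
  assumes "impl_filter A Q" "x \<in> L" "x' \<in> L" "y \<in> L" "y' \<in> L" "imp x' x \<in> Q" "imp y y' \<in> Q"
  shows "imp (imp x y) (imp x' y') \<in> Q"
proof -
  have left: "imp (oplus (neg x) y) (oplus (neg x') y) \<in> Q"
    using filter_plus_cong[of Q "neg x" "neg x'" y] assms imp_contrapos[of x' x] by simp
  have "imp (oplus y (neg x')) (oplus y' (neg x')) \<in> Q"
    using filter_plus_cong[of Q y y' "neg x'"] assms by simp
  hence right: "imp (oplus (neg x') y) (oplus (neg x') y') \<in> Q"
    using assms plus_comm[of y "neg x'"] plus_comm[of y' "neg x'"] by simp
  show ?thesis
    using filter_trans[OF assms(1) _ _ _ left right] assms unfolding mv_imp_def by simp
qed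

lemma coset_imp_member:
  assumes "impl_filter A Q" "x' \<in> mv_coset A Q x" "y' \<in> mv_coset A Q y" "x \<in> L" "y \<in> L"
  shows "imp x' y' \<in> mv_coset A Q (imp x y)"
  using assms(2,3) filter_imp_cong[OF assms(1)] assms(4,5) unfolding coset_iff by simp

lemma coset_neg_member:
  assumes "impl_filter A Q" "x' \<in> mv_coset A Q x" "x \<in> L"
  shows "neg x' \<in> mv_coset A Q (neg x)"
  using assms(2,3) imp_contrapos unfolding coset_iff by simp

lemma coset_imp_filter_iff:
  assumes "impl_filter A Q" "x \<in> mv_coset A Q c" "y \<in> mv_coset A Q d" "c \<in> L" "d \<in> L"
  shows "imp x y \<in> Q \<longleftrightarrow> imp c d \<in> Q"
proof -
  have "imp x y \<in> L" "imp (imp c d) (imp x y) \<in> Q" "imp (imp x y) (imp c d) \<in> Q"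
    using coset_imp_member[OF assms] unfolding coset_iff by auto
  thus ?thesis using filter_mp[OF assms(1)] assms(4,5) by (meson imp_closed)
qed

lemma same_coset_imp:
  assumes "impl_filter A Q" "x \<in> mv_coset A Q c" "y \<in> mv_coset A Q c" "c \<in> L"
  shows "imp x y \<in> Q"
  using coset_imp_filter_iff[OF assms(1-3) assms(4,4)] filter_one[OF assms(1)] assms(4) by simp

lemma quot_imp_coset:
  assumes "impl_filter A Q" "x \<in> L" "y \<in> L"
  shows "quot_imp A Q (mv_coset A Q x) (mv_coset A Q y) = mv_coset A Q (imp x y)"
proof -
  have eq: "mv_coset A Q (imp x' y') = mv_coset A Q (imp x y)"
    if "x' \<in> mv_coset A Q x" "y' \<in> mv_coset A Q y" for x' y'
    using coset_eq_member[OF assms(1) _ coset_imp_member[OF assms(1) that assms(2,3)]] assms by simp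
  show ?thesis unfolding quot_imp_def
  proof (rule UN_constant_eq[OF coset_refl[OF assms(1,2)]], intro ballI)
    fix x' assume "x' \<in> mv_coset A Q x"
    show "(\<Union>y'\<in>mv_coset A Q y. mv_coset A Q (imp x' y')) = mv_coset A Q (imp x y)"
      by (rule UN_constant_eq[OF coset_refl[OF assms(1,3)]]) (simp add: eq[OF \<open>x' \<in> mv_coset A Q x\<close>])
  qed
qed

lemma quot_neg_coset:
  assumes "impl_filter A Q" "x \<in> L"
  shows "quot_neg A Q (mv_coset A Q x) = mv_coset A Q (neg x)"
proof -
  have eq: "mv_coset A Q (neg x') = mv_coset A Q (neg x)" if "x' \<in> mv_coset A Q x" for x'
    using coset_eq_member[OF assms(1) _ coset_neg_member[OF assms(1) that assms(2)]] assms by simp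
  show ?thesis unfolding quot_neg_def
    by (rule UN_constant_eq[OF coset_refl[OF assms]]) (simp add: eq)
qed

lemma prime_filter_is_filter: "prime_impl_filter A Q \<Longrightarrow> impl_filter A Q"
  unfolding prime_impl_filter_def by (rule conjunct1)

lemma prime_filter_linear:
  assumes "prime_impl_filter A Q" "x \<in> L" "y \<in> L"
  shows "imp x y \<in> Q \<or> imp y x \<in> Q"
proof -
  have Q: "impl_filter A Q" using prime_filter_is_filter[OF assms(1)] .
  have linear: "\<forall>C\<in>mv_quot A Q. \<forall>D\<in>mv_quot A Q.
        quot_imp A Q C D = mv_coset A Q one \<or> quot_imp A Q D C = mv_coset A Q one"
    using assms(1) unfolding prime_impl_filter_def by (rule conjunct2)
  have "mv_coset A Q x \<in> mv_quot A Q" "mv_coset A Q y \<in> mv_quot A Q"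
    unfolding mv_quot_def using assms by auto
  hence "quot_imp A Q (mv_coset A Q x) (mv_coset A Q y) = mv_coset A Q one \<or>
         quot_imp A Q (mv_coset A Q y) (mv_coset A Q x) = mv_coset A Q one"
    using linear by blast
  hence "mv_coset A Q (imp x y) = mv_coset A Q one \<or> mv_coset A Q (imp y x) = mv_coset A Q one"
    by (simp only: quot_imp_coset[OF Q assms(2,3)] quot_imp_coset[OF Q assms(3,2)])
  thus ?thesis
    using coset_eq_one_iff[OF Q imp_closed[OF assms(2,3)]] coset_eq_one_iff[OF Q imp_closed[OF assms(3,2)]]
    by blast
qed

section \<open>Saturated sets and the coset crossing them\<close>

text \<open>\<open>X\<close> is \<open>P\<close>-saturated if it is closed under modus ponens with implications
  from \<open>P\<close>; equivalently, \<open>X\<close> is a union of \<open>\<sim>\<^sub>P\<close>-classes that is upward closed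
  in \<open>L/P\<close>.\<close>
definition saturated :: "'a set \<Rightarrow> 'a set \<Rightarrow> bool" where
  "saturated P X \<longleftrightarrow> X \<subseteq> L \<and> (\<forall>x\<in>X. \<forall>y\<in>L. imp x y \<in> P \<longrightarrow> y \<in> X)"

lemma saturatedD: "saturated P X \<Longrightarrow> x \<in> X \<Longrightarrow> y \<in> L \<Longrightarrow> imp x y \<in> P \<Longrightarrow> y \<in> X"
  unfolding saturated_def by blast

lemma saturated_subset: "saturated P X \<Longrightarrow> X \<subseteq> L"
  unfolding saturated_def by blast

lemma saturated_up:
  assumes "impl_filter A P" "saturated P X" "x \<in> X" "y \<in> L" "le x y"
  shows "y \<in> X"
  using saturatedD[OF assms(2-4)] filter_one[OF assms(1)] assms(5) unfolding mv_le_def by simp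

lemma saturated_Int: "saturated P X \<Longrightarrow> saturated P Y \<Longrightarrow> saturated P (X \<inter> Y)"
  unfolding saturated_def by blast

lemma filter_saturated: "impl_filter A P \<Longrightarrow> saturated P P"
  unfolding saturated_def using filter_subset filter_mp by blast

text \<open>An up-closed set is saturated for every filter contained in its kernel:
  if \<open>x \<in> X\<close>, \<open>y \<notin> X\<close> and \<open>x \<rightarrow> y\<close> were in the kernel, then
  \<open>(x \<rightarrow> y) \<rightarrow> y = x \<or> y \<in> X\<close> would contradict the definition of the kernel.\<close>
lemma saturated_if_kernel:
  assumes "up_closed A X" "P \<subseteq> kernel A X"
  shows "saturated P X"
  unfolding saturated_def
proof (intro conjI ballI impI)
  show XL: "X \<subseteq> L" using assms(1) unfolding up_closed_def by (rule conjunct1)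
  have up: "\<forall>x\<in>X. \<forall>y\<in>L. le x y \<longrightarrow> y \<in> X"
    using assms(1) unfolding up_closed_def by (rule conjunct2)
  fix x y assume x: "x \<in> X" and y: "y \<in> L" and xy: "imp x y \<in> P"
  have xL: "x \<in> L" using x XL by blast
  show "y \<in> X"
  proof (rule ccontr)
    assume "y \<notin> X"
    hence "imp (imp x y) y \<notin> X" using xy assms(2) y unfolding kernel_def by blast
    moreover have "imp (imp x y) y \<in> X"
      unfolding imp_imp_eq_join using up x join_upper1[OF xL y] join_closed[OF xL y] by blast
    ultimately show False by blast
  qed
qed

lemma PSpec_saturated: "F \<in> PSpec A P \<Longrightarrow> saturated P F"
  unfolding PSpec_def prime_lattice_filter_def lattice_filter_def
  using saturated_if_kernel by blast

lemma saturated_below: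
  assumes "prime_impl_filter A P" "saturated P X" "x \<in> X" "y \<in> L" "y \<notin> X"
  shows "imp y x \<in> P"
  using prime_filter_linear[OF assms(1) _ assms(4)] saturatedD[OF assms(2,3,4)] assms(5)
    saturated_subset[OF assms(2)] assms(3) by blast

text \<open>Hence at most one \<open>Q\<close>-coset crosses a \<open>P\<close>-saturated set: if \<open>y\<^sub>1\<close> and \<open>y\<^sub>2\<close>
  lie outside and \<open>x\<^sub>1\<close>, \<open>x\<^sub>2\<close> inside, with \<open>x\<^sub>i \<sim>\<^sub>Q y\<^sub>i\<close>, then
  \<open>y\<^sub>1 \<le> x\<^sub>2 \<sim> y\<^sub>2\<close> and \<open>y\<^sub>2 \<le> x\<^sub>1 \<sim> y\<^sub>1\<close> modulo \<open>Q\<close>.\<close>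
lemma crossing_coset_unique:
  assumes P: "prime_impl_filter A P" and Q: "impl_filter A Q" and PQ: "P \<subseteq> Q"
    and X: "saturated P X" and c: "c\<^sub>1 \<in> L" "c\<^sub>2 \<in> L"
    and x\<^sub>1: "x\<^sub>1 \<in> mv_coset A Q c\<^sub>1" "x\<^sub>1 \<in> X" and y\<^sub>1: "y\<^sub>1 \<in> mv_coset A Q c\<^sub>1" "y\<^sub>1 \<notin> X"
    and x\<^sub>2: "x\<^sub>2 \<in> mv_coset A Q c\<^sub>2" "x\<^sub>2 \<in> X" and y\<^sub>2: "y\<^sub>2 \<in> mv_coset A Q c\<^sub>2" "y\<^sub>2 \<notin> X"
  shows "mv_coset A Q c\<^sub>1 = mv_coset A Q c\<^sub>2"
proof -
  have L: "x\<^sub>1 \<in> L" "y\<^sub>1 \<in> L" "x\<^sub>2 \<in> L" "y\<^sub>2 \<in> L"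
    using x\<^sub>1 y\<^sub>1 x\<^sub>2 y\<^sub>2 unfolding coset_iff by auto
  have "imp y\<^sub>1 y\<^sub>2 \<in> Q"
    using filter_trans[OF Q L(2,3,4)] saturated_below[OF P X x\<^sub>2(2) L(2) y\<^sub>1(2)] PQ
      same_coset_imp[OF Q x\<^sub>2(1) y\<^sub>2(1) c(2)] by blast
  moreover have "imp y\<^sub>2 y\<^sub>1 \<in> Q"
    using filter_trans[OF Q L(4,1,2)] saturated_below[OF P X x\<^sub>1(2) L(4) y\<^sub>2(2)] PQ
      same_coset_imp[OF Q x\<^sub>1(1) y\<^sub>1(1) c(1)] by blast
  ultimately have "mv_coset A Q y\<^sub>1 = mv_coset A Q y\<^sub>2" using coset_eq[OF Q L(2,4)] by blast
  thus ?thesis using coset_eq_member[OF Q c(1) y\<^sub>1(1)] coset_eq_member[OF Q c(2) y\<^sub>2(1)] by simp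
qed

lemma qQ_crossing:
  assumes P: "prime_impl_filter A P" and Q: "impl_filter A Q" and PQ: "P \<subseteq> Q"
    and X: "saturated P X" and c: "c \<in> L"
    and x: "x \<in> mv_coset A Q c" "x \<in> X" and y: "y \<in> mv_coset A Q c" "y \<notin> X"
  shows "qQ A Q X = mv_coset A Q c"
  unfolding qQ_def
proof (rule the_equality)
  show "mv_coset A Q c \<in> mv_quot A Q \<and> mv_coset A Q c \<inter> X \<noteq> {} \<and> mv_coset A Q c - X \<noteq> {}"
    unfolding mv_quot_def using c x y by blast
next
  fix C assume C: "C \<in> mv_quot A Q \<and> C \<inter> X \<noteq> {} \<and> C - X \<noteq> {}"
  then obtain c' x' y' where "c' \<in> L" "C = mv_coset A Q c'"
    and "x' \<in> C" "x' \<in> X" "y' \<in> C" "y' \<notin> X"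
    unfolding mv_quot_def by blast
  thus "C = mv_coset A Q c" using crossing_coset_unique[OF P Q PQ X _ c _ _ _ _ x y] by blast
qed

text \<open>For \<open>F \<in> PSpec(P)\<close> a crossing coset exists: pick \<open>q \<in> Q - P\<close>; as \<open>q\<close> is not
  in the kernel of \<open>F\<close>, some \<open>a \<notin> F\<close> has \<open>q \<rightarrow> a \<in> F\<close>, and \<open>q \<rightarrow> a \<sim>\<^sub>Q a\<close>
  because \<open>q \<in> Q\<close>.\<close>
lemma qQ_PSpec_crossing:
  assumes P: "prime_impl_filter A P" and Q: "impl_filter A Q" and PQ: "P \<subset> Q"
    and F: "F \<in> PSpec A P"
  obtains c x y where "c \<in> L" "qQ A Q F = mv_coset A Q c"
    "x \<in> mv_coset A Q c" "x \<in> F" "y \<in> mv_coset A Q c" "y \<notin> F"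
proof -
  obtain q where q: "q \<in> Q" "q \<notin> P" using PQ by blast
  have qL: "q \<in> L" using q filter_subset[OF Q] by blast
  have "q \<notin> kernel A F" using q F unfolding PSpec_def by simp
  then obtain a where a: "a \<in> L" "a \<notin> F" "imp q a \<in> F" unfolding kernel_def using qL by blast
  have "imp a (imp q a) = one"
    unfolding mv_imp_def using a(1) qL plus_left_comm[of "neg a" "neg q" a] by simp
  hence "imp a (imp q a) \<in> Q" using filter_one[OF Q] by simp
  moreover have "imp (imp q a) a \<in> Q"
    unfolding imp_imp_eq_join using filter_up[OF Q q(1) join_closed[OF qL a(1)] join_upper1[OF qL a(1)]] .
  ultimately have qa: "imp q a \<in> mv_coset A Q a" unfolding coset_iff using a qL by simp
  show ?thesis
    using that[OF a(1) qQ_crossing[OF P Q _ PSpec_saturated[OF F] a(1) qa a(3) coset_refl[OF Q a(1)] a(2)]]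
      PQ qa a(3) coset_refl[OF Q a(1)] a(2) by blast
qed

section \<open>Negation: \<open>q\<^sub>Q(F\<^sup>+) = \<not> q\<^sub>Q(F)\<close>\<close>

lemma fplus_iff: "z \<in> fplus A F \<longleftrightarrow> z \<in> L \<and> neg z \<notin> F"
  unfolding fplus_def fsub_def mv_imp_def by auto

lemma saturated_fplus:
  assumes "saturated P F"
  shows "saturated P (fplus A F)"
  unfolding saturated_def
proof (intro conjI ballI impI)
  show "fplus A F \<subseteq> L" using fplus_iff by blast
  fix z w assume z: "z \<in> fplus A F" and w: "w \<in> L" and zw: "imp z w \<in> P"
  have zL: "z \<in> L" "neg z \<notin> F" using z fplus_iff by auto
  have "neg w \<notin> F"
  proof
    assume "neg w \<in> F"
    moreover have "imp (neg w) (neg z) \<in> P" using imp_contrapos[OF zL(1) w] zw by simp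
    ultimately show False using saturatedD[OF assms _ neg_closed[OF zL(1)]] zL(2) by blast
  qed
  thus "w \<in> fplus A F" using w fplus_iff by blast
qed

text \<open>Negation swaps the inside and outside witnesses of a crossing coset.\<close>
lemma qQ_fplus:
  assumes P: "prime_impl_filter A P" and Q: "impl_filter A Q" and PQ: "P \<subset> Q"
    and F: "F \<in> PSpec A P"
  shows "qQ A Q (fplus A F) = quot_neg A Q (qQ A Q F)"
proof -
  obtain c x y where c: "c \<in> L" "qQ A Q F = mv_coset A Q c"
    and x: "x \<in> mv_coset A Q c" "x \<in> F" and y: "y \<in> mv_coset A Q c" "y \<notin> F"
    using qQ_PSpec_crossing[OF P Q PQ F] by blast
  have xL: "x \<in> L" and yL: "y \<in> L" using x y coset_iff by auto
  have "qQ A Q (fplus A F) = mv_coset A Q (neg c)"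
  proof (rule qQ_crossing[OF P Q _ saturated_fplus[OF PSpec_saturated[OF F]] neg_closed[OF c(1)]])
    show "P \<subseteq> Q" using PQ by blast
    show "neg y \<in> mv_coset A Q (neg c)" using coset_neg_member[OF Q y(1) c(1)] .
    show "neg y \<in> fplus A F" using yL y(2) fplus_iff by simp
    show "neg x \<in> mv_coset A Q (neg c)" using coset_neg_member[OF Q x(1) c(1)] .
    show "neg x \<notin> fplus A F" using xL x(2) fplus_iff by simp
  qed
  thus ?thesis using quot_neg_coset[OF Q c(1)] c(2) by simp
qed

section \<open>Implication: \<open>q\<^sub>Q(F \<sqsubseteq>\<rightarrow> G) = q\<^sub>Q(F) \<rightarrow> q\<^sub>Q(G)\<close>\<close>

lemma fimp_iff: "z \<in> fimp A F G \<longleftrightarrow> z \<in> L \<and> (\<forall>a\<in>L - G. imp z a \<notin> F \<inter> G)"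
  unfolding fimp_def fsub_def by auto

text \<open>\<open>F \<sqsubseteq>\<rightarrow> G\<close> is saturated, by the suffixing law.\<close>
lemma saturated_fimp:
  assumes Pf: "impl_filter A P" and "saturated P F" "saturated P G"
  shows "saturated P (fimp A F G)"
  unfolding saturated_def
proof (intro conjI ballI impI)
  have H: "saturated P (F \<inter> G)" using saturated_Int assms by blast
  show "fimp A F G \<subseteq> L" using fimp_iff by blast
  fix z w assume z: "z \<in> fimp A F G" and w: "w \<in> L" and zw: "imp z w \<in> P"
  have zL: "z \<in> L" "\<forall>a\<in>L - G. imp z a \<notin> F \<inter> G" using z fimp_iff by auto
  have "imp w a \<notin> F \<inter> G" if a: "a \<in> L - G" for a
  proof
    assume wa: "imp w a \<in> F \<inter> G"
    have aL: "a \<in> L" using a by blast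
    have "imp (imp w a) (imp z a) \<in> P"
      using filter_up[OF Pf zw _ imp_suffixing[OF zL(1) w aL]] zL(1) w aL by simp
    hence "imp z a \<in> F \<inter> G" using saturatedD[OF H wa] zL(1) aL by simp
    thus False using zL(2) a by blast
  qed
  thus "w \<in> fimp A F G" using w fimp_iff by blast
qed

text \<open>An implication from \<open>F \<inter> G\<close> into the complement of \<open>G\<close> is never in
  \<open>F \<sqsubseteq>\<rightarrow> G\<close>: for \<open>b \<in> F \<inter> G\<close> we have \<open>(b \<rightarrow> a) \<rightarrow> a = b \<or> a \<in> F \<inter> G\<close>.\<close>
lemma fimp_excludes:
  assumes Pf: "impl_filter A P" and H: "saturated P (F \<inter> G)"
    and b: "b \<in> F \<inter> G" and a: "a \<in> L" "a \<notin> G"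
  shows "imp b a \<notin> fimp A F G"
proof
  assume "imp b a \<in> fimp A F G"
  hence "imp (imp b a) a \<notin> F \<inter> G" using fimp_iff a by blast
  moreover have bL: "b \<in> L" using b saturated_subset[OF H] by blast
  have "imp (imp b a) a \<in> F \<inter> G"
    unfolding imp_imp_eq_join using saturated_up[OF Pf H b join_closed[OF bL a(1)] join_upper1[OF bL a(1)]] .
  ultimately show False by blast
qed

text \<open>Conversely, if \<open>x \<notin> F\<close>, \<open>y \<in> G\<close> and \<open>y \<le> x\<close> modulo \<open>P\<close>, then
  \<open>x \<rightarrow> y \<in> F \<sqsubseteq>\<rightarrow> G\<close>: from \<open>(x \<rightarrow> y) \<rightarrow> a \<in> F\<close> with \<open>a \<notin> G\<close> (so \<open>a \<le> y\<close>
  modulo \<open>P\<close>) we would get \<open>y \<or> x = (x \<rightarrow> y) \<rightarrow> y \<in> F\<close>, and \<open>y \<or> x \<le> x\<close> modulo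
  \<open>P\<close> would force \<open>x \<in> F\<close>.\<close>
lemma fimp_contains:
  assumes P: "prime_impl_filter A P" and F: "saturated P F" and G: "saturated P G"
    and x: "x \<in> L" "x \<notin> F" and y: "y \<in> G" and yx: "imp y x \<in> P"
  shows "imp x y \<in> fimp A F G"
  unfolding fimp_iff
proof (intro conjI ballI notI)
  have Pf: "impl_filter A P" using prime_filter_is_filter[OF P] .
  have yL: "y \<in> L" using y saturated_subset[OF G] by blast
  show xyL: "imp x y \<in> L" using x(1) yL by simp
  fix a assume a: "a \<in> L - G" and h: "imp (imp x y) a \<in> F \<inter> G"
  have aL: "a \<in> L" using a by blast
  have "imp a y \<in> P" using saturated_below[OF P G y aL] a by blast
  hence "imp (imp (imp x y) a) (imp (imp x y) y) \<in> P"
    using filter_up[OF Pf _ _ imp_prefixing[OF aL yL xyL]] xyL aL yL by simp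
  hence "imp (imp x y) y \<in> F" using saturatedD[OF F _ imp_closed[OF xyL yL]] h by blast
  hence yxF: "join y x \<in> F" using join_commute[OF x(1) yL] unfolding imp_imp_eq_join by simp
  have "imp (join y x) x = join (imp y x) x" by (simp only: imp_imp_eq_join[symmetric])
  moreover have "join (imp y x) x \<in> P"
    using filter_up[OF Pf yx _ join_upper1] x(1) yL by simp
  ultimately have "x \<in> F" using saturatedD[OF F yxF x(1)] by simp
  thus False using x(2) by blast
qed

text \<open>Case \<open>q\<^sub>Q(F) \<le> q\<^sub>Q(G)\<close>: both sides are the top coset.  The top element lies in
  \<open>F \<sqsubseteq>\<rightarrow> G\<close>, and some \<open>b' \<in> F \<inter> G\<close> satisfies \<open>b' \<rightarrow> a \<in> Q\<close>: either the inside
  witness \<open>b\<close> of \<open>F\<close> itself, or else (if \<open>b \<notin> G\<close>) the inside witness \<open>y\<close> of \<open>G\<close>,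
  which then lies in \<open>F\<close> as well.\<close>
lemma qQ_fimp_below:
  assumes P: "prime_impl_filter A P" and Q: "impl_filter A Q" and PQ: "P \<subseteq> Q"
    and F: "saturated P F" and G: "saturated P G" and c: "c \<in> L" and d: "d \<in> L"
    and b: "b \<in> mv_coset A Q c" "b \<in> F" and y: "y \<in> mv_coset A Q d" "y \<in> G"
    and a: "a \<in> mv_coset A Q d" "a \<notin> G" and cd: "imp c d \<in> Q"
  shows "qQ A Q (fimp A F G) = mv_coset A Q (imp c d)"
proof -
  have Pf: "impl_filter A P" using prime_filter_is_filter[OF P] .
  have L: "b \<in> L" "y \<in> L" "a \<in> L" using b y a unfolding coset_iff by auto
  have top: "mv_coset A Q (imp c d) = mv_coset A Q one"
    using coset_eq_one_iff[OF Q imp_closed[OF c d]] cd by blast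
  obtain b' where b': "b' \<in> F \<inter> G" "imp b' a \<in> Q"
  proof (cases "b \<in> G")
    case True
    thus ?thesis using that b(2) coset_imp_filter_iff[OF Q b(1) a(1) c d] cd by blast
  next
    case False
    have "y \<in> F" using saturatedD[OF F b(2) L(2) saturated_below[OF P G y(2) L(1) False]] .
    thus ?thesis using that y(2) same_coset_imp[OF Q y(1) a(1) d] by blast
  qed
  show ?thesis
  proof (rule qQ_crossing[OF P Q PQ saturated_fimp[OF Pf F G] imp_closed[OF c d]])
    show "one \<in> mv_coset A Q (imp c d)" using top coset_refl[OF Q one_closed] by simp
    show "one \<in> fimp A F G" using fimp_iff by simp
    show "imp b' a \<in> mv_coset A Q (imp c d)" using top coset_one_iff[OF Q] b'(2) by simp
    show "imp b' a \<notin> fimp A F G"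
      using fimp_excludes[OF Pf saturated_Int[OF F G] b'(1) L(3) a(2)] .
  qed
qed

text \<open>Case \<open>q\<^sub>Q(F) \<not>\<le> q\<^sub>Q(G)\<close>: no representative of \<open>q\<^sub>Q(F)\<close> is even \<open>P\<close>-below one of
  \<open>q\<^sub>Q(G)\<close>, so by primeness of \<open>P\<close> the inside witness \<open>y\<close> of \<open>G\<close> is \<open>P\<close>-below both
  witnesses \<open>x \<notin> F\<close> and \<open>b \<in> F\<close>; thus \<open>b \<in> G\<close>, and \<open>x \<rightarrow> y\<close> (inside) and \<open>b \<rightarrow> a\<close>
  (outside) witness that \<open>[c \<rightarrow> d]\<close> crosses \<open>F \<sqsubseteq>\<rightarrow> G\<close>.\<close>
lemma qQ_fimp_not_below:
  assumes P: "prime_impl_filter A P" and Q: "impl_filter A Q" and PQ: "P \<subseteq> Q"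
    and F: "saturated P F" and G: "saturated P G" and c: "c \<in> L" and d: "d \<in> L"
    and b: "b \<in> mv_coset A Q c" "b \<in> F" and x: "x \<in> mv_coset A Q c" "x \<notin> F"
    and y: "y \<in> mv_coset A Q d" "y \<in> G" and a: "a \<in> mv_coset A Q d" "a \<notin> G"
    and cd: "imp c d \<notin> Q"
  shows "qQ A Q (fimp A F G) = mv_coset A Q (imp c d)"
proof -
  have Pf: "impl_filter A P" using prime_filter_is_filter[OF P] .
  have L: "b \<in> L" "x \<in> L" "y \<in> L" "a \<in> L" using b x y a unfolding coset_iff by auto
  have "imp x y \<notin> P" using coset_imp_filter_iff[OF Q x(1) y(1) c d] cd PQ by blast
  hence yx: "imp y x \<in> P" using prime_filter_linear[OF P L(2,3)] by blast
  have "imp b y \<notin> P" using coset_imp_filter_iff[OF Q b(1) y(1) c d] cd PQ by blast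
  hence "imp y b \<in> P" using prime_filter_linear[OF P L(1,3)] by blast
  hence bG: "b \<in> G" using saturatedD[OF G y(2) L(1)] by blast
  show ?thesis
  proof (rule qQ_crossing[OF P Q PQ saturated_fimp[OF Pf F G] imp_closed[OF c d]])
    show "imp x y \<in> mv_coset A Q (imp c d)" using coset_imp_member[OF Q x(1) y(1) c d] .
    show "imp x y \<in> fimp A F G" using fimp_contains[OF P F G L(2) x(2) y(2) yx] .
    show "imp b a \<in> mv_coset A Q (imp c d)" using coset_imp_member[OF Q b(1) a(1) c d] .
    show "imp b a \<notin> fimp A F G"
      using fimp_excludes[OF Pf saturated_Int[OF F G] _ L(4) a(2)] b(2) bG by blast
  qed
qed

lemma qQ_fimp:
  assumes P: "prime_impl_filter A P" and Q: "impl_filter A Q" and PQ: "P \<subset> Q"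
    and F: "F \<in> PSpec A P" and G: "G \<in> PSpec A P"
  shows "qQ A Q (fimp A F G) = quot_imp A Q (qQ A Q F) (qQ A Q G)"
proof -
  obtain c b x where c: "c \<in> L" "qQ A Q F = mv_coset A Q c"
    and b: "b \<in> mv_coset A Q c" "b \<in> F" and x: "x \<in> mv_coset A Q c" "x \<notin> F"
    using qQ_PSpec_crossing[OF P Q PQ F] by blast
  obtain d y a where d: "d \<in> L" "qQ A Q G = mv_coset A Q d"
    and y: "y \<in> mv_coset A Q d" "y \<in> G" and a: "a \<in> mv_coset A Q d" "a \<notin> G"
    using qQ_PSpec_crossing[OF P Q PQ G] by blast
  have sat: "P \<subseteq> Q" "saturated P F" "saturated P G"
    using PQ PSpec_saturated[OF F] PSpec_saturated[OF G] by auto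
  have "qQ A Q (fimp A F G) = mv_coset A Q (imp c d)"
    using qQ_fimp_below[OF P Q sat c(1) d(1) b y a] qQ_fimp_not_below[OF P Q sat c(1) d(1) b x y a]
    by blast
  thus ?thesis using quot_imp_coset[OF Q c(1) d(1)] c(2) d(2) by simp
qed

section \<open>Compatibility with the equivalence defining \<open>hat L\<^sub>P\<close>\<close>

text \<open>\<open>P\<close> itself is crossed by the top coset \<open>Q\<close>, which contains \<open>1 \<in> P\<close> and any
  element of \<open>Q - P\<close>.\<close>
lemma qQ_filter:
  assumes P: "prime_impl_filter A P" and Q: "impl_filter A Q" and PQ: "P \<subset> Q"
  shows "qQ A Q P = mv_coset A Q one"
proof -
  have Pf: "impl_filter A P" using prime_filter_is_filter[OF P] .
  obtain q where q: "q \<in> Q" "q \<notin> P" using PQ by blast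
  show ?thesis
    using qQ_crossing[OF P Q _ filter_saturated[OF Pf] one_closed coset_refl[OF Q one_closed]
        filter_one[OF Pf] _ q(2)] PQ coset_one_iff[OF Q] q(1) by blast
qed

lemma qQ_equiv:
  assumes P: "prime_impl_filter A P" and Q: "impl_filter A Q" and PQ: "P \<subset> Q"
    and F: "F \<in> PSpec A P" and G: "G \<in> PSpec A P" and equiv: "pspec_equiv A P F G"
  shows "qQ A Q F = qQ A Q G"
proof -
  obtain c where c: "c \<in> L" "qQ A Q F = mv_coset A Q c"
    using qQ_PSpec_crossing[OF P Q PQ F] by blast
  obtain d where d: "d \<in> L" "qQ A Q G = mv_coset A Q d"
    using qQ_PSpec_crossing[OF P Q PQ G] by blast
  have "mv_coset A Q (imp c d) = mv_coset A Q one" "mv_coset A Q (imp d c) = mv_coset A Q one"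
    using qQ_fimp[OF P Q PQ F G] qQ_fimp[OF P Q PQ G F] equiv qQ_filter[OF P Q PQ]
      quot_imp_coset[OF Q c(1) d(1)] quot_imp_coset[OF Q d(1) c(1)] c(2) d(2)
    unfolding pspec_equiv_def by simp_all
  hence "imp c d \<in> Q" "imp d c \<in> Q" using coset_eq_one_iff[OF Q] c(1) d(1) by simp_all
  thus ?thesis using coset_eq[OF Q c(1) d(1)] c(2) d(2) by simp
qed

end

theorem mainTheorem19:
  assumes "mv_algebra A"
    and "prime_impl_filter A P" and "prime_impl_filter A Q" and "P \<subset> Q"
    and "F \<in> PSpec A P" and "G \<in> PSpec A P"
  shows "qQ A Q (fplus A F) = quot_neg A Q (qQ A Q F)
     \<and> qQ A Q (fimp A F G) = quot_imp A Q (qQ A Q F) (qQ A Q G)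
     \<and> (pspec_equiv A P F G \<longrightarrow> qQ A Q F = qQ A Q G)"
proof -
  interpret mv_alg A using assms(1) by unfold_locales
  have Q: "impl_filter A Q" using prime_filter_is_filter[OF assms(3)] .
  show ?thesis
    using qQ_fplus[OF assms(2) Q assms(4,5)] qQ_fimp[OF assms(2) Q assms(4,5,6)]
      qQ_equiv[OF assms(2) Q assms(4,5,6)] by blast
qed

end
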